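(* If $\mathbf A$ is a complete perfect DqRA, then $\mathbf A\cong(\mathbf A_+)^+$ as DqRAs, via the map $\psi(a)=\{j\in J^\infty(\mathbf A)\mid j\leqslant a\}$.
   Context: A DqRA is a structure $(A,\wedge,\vee,\cdot,1,\sim,-,\neg)$ with $(A,\wedge,\vee)$ a distributive lattice, $(A,\cdot,1)$ a monoid, $a\cdot b\leqslant c\iff a\leqslant -(b\cdot{\sim}c)\iff b\leqslant{\sim}(-c\cdot a)$, $\neg\neg a=a$, $\neg(a\wedge b)=\neg a\vee\neg b$, and $\neg(a\cdot b)=\neg a+\neg b$ where $a+b=-({\sim}b\cdot{\sim}a)$. Complete perfect: complete, every element the join of completely join-irreducibles ($J^\infty(\mathbf A)$) below it and meet of completely meet-irreducibles above it. $\kappa(j)=\bigvee\{a\mid j\not\leqslant a\}$. $\mathbf A_+=(J^\infty(\mathbf A),I_1,\preccurlyeq,\circ,{}^\sim,{}^-,{}^\neg)$ with $I_1=\{i\in J^\infty(\mathbf A)\mid i\leqslant1\}$, $a\preccurlyeq b$ iff $b\leqslant a$, $c\in a\circ b$ iff $c\leqslant a\cdot b$, $a^\sim={\sim}\kappa(a)$, $a^-=-\kappa(a)$, $a^\neg=\neg\kappa(a)$. For such a structure $\mathbb W=(W,I,\preccurlyeq,\circ,{}^\sim,{}^-,{}^\neg)$, $\mathbb W^+=(\mathsf{Up}(W,\preccurlyeq),\cap,\cup,\circ,I,\sim,-,\neg)$ where $\mathsf{Up}$ is the set of upsets, $U\circ V=\bigcup\{x\circ y\mid x\in U,y\in V\}$,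 ${\sim}U=\{w\mid w^-\notin U\}$, $-U=\{w\mid w^\sim\notin U\}$, $\neg U=\{w\mid w^\neg\notin U\}$. *)

theory Defs
  imports Main
begin

text \<open>A DqRA on a lattice carried by a type 'a (lattice operations = the
type-class inf/sup/order), with monoid (mult, e), residual-type negations
tld (the tilde), mn (the minus) and the involution ng.\<close>

definition dq_plus :: "('a \<Rightarrow> 'a \<Rightarrow> 'a) \<Rightarrow> ('a \<Rightarrow> 'a) \<Rightarrow> ('a \<Rightarrow> 'a) \<Rightarrow> 'a \<Rightarrow> 'a \<Rightarrow> 'a" where
  "dq_plus mult tld mn a b = mn (mult (tld b) (tld a))"

definition DqRA :: "('a::lattice \<Rightarrow> 'a \<Rightarrow> 'a) \<Rightarrow> 'a \<Rightarrow> ('a \<Rightarrow> 'a) \<Rightarrow> ('a \<Rightarrow> 'a) \<Rightarrow> ('a \<Rightarrow> 'a) \<Rightarrow> bool" where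
  "DqRA mult e tld mn ng \<longleftrightarrow>
     (\<forall>a b c::'a. inf a (sup b c) = sup (inf a b) (inf a c)) \<and>
     (\<forall>a b c. mult (mult a b) c = mult a (mult b c)) \<and>
     (\<forall>a. mult e a = a \<and> mult a e = a) \<and>
     (\<forall>a b c. (mult a b \<le> c \<longleftrightarrow> a \<le> mn (mult b (tld c))) \<and>
              (mult a b \<le> c \<longleftrightarrow> b \<le> tld (mult (mn c) a))) \<and>
     (\<forall>a. ng (ng a) = a) \<and>
     (\<forall>a b. ng (inf a b) = sup (ng a) (ng b)) \<and>
     (\<forall>a b. ng (mult a b) = dq_plus mult tld mn (ng a) (ng b))"

definition cjirr :: "'a::complete_lattice \<Rightarrow> bool" where
  "cjirr j \<longleftrightarrow> (\<forall>S. j = Sup S \<longrightarrow> j \<in> S)"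

definition cmirr :: "'a::complete_lattice \<Rightarrow> bool" where
  "cmirr m \<longleftrightarrow> (\<forall>S. m = Inf S \<longrightarrow> m \<in> S)"

definition Jinf :: "'a::complete_lattice set" where
  "Jinf = {j. cjirr j}"

definition perfect_lattice :: "'a::complete_lattice itself \<Rightarrow> bool" where
  "perfect_lattice _ \<longleftrightarrow>
     (\<forall>a::'a. a = Sup {j. cjirr j \<and> j \<le> a} \<and> a = Inf {m. cmirr m \<and> a \<le> m})"

definition kappa :: "'a::complete_lattice \<Rightarrow> 'a" where
  "kappa j = Sup {a. \<not> j \<le> a}"

text \<open>The frame A_+ = (Jinf, I_1, \<preccurlyeq>, \<circ>, ^\<sim>, ^-, ^\<not>).\<close>

definition plus_le :: "'a::complete_lattice \<Rightarrow> 'a \<Rightarrow> bool" where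
  "plus_le a b \<longleftrightarrow> b \<le> a"

definition plus_I :: "'a::complete_lattice \<Rightarrow> 'a set" where
  "plus_I e = {i \<in> Jinf. i \<le> e}"

definition plus_comp :: "('a::complete_lattice \<Rightarrow> 'a \<Rightarrow> 'a) \<Rightarrow> 'a \<Rightarrow> 'a \<Rightarrow> 'a set" where
  "plus_comp mult a b = {c \<in> Jinf. c \<le> mult a b}"

definition plus_un :: "('a::complete_lattice \<Rightarrow> 'a) \<Rightarrow> 'a \<Rightarrow> 'a" where
  "plus_un f a = f (kappa a)"

text \<open>Complex algebra W^+ of a frame (W, I, r, comp, ...), on upsets.\<close>

definition Up :: "'w set \<Rightarrow> ('w \<Rightarrow> 'w \<Rightarrow> bool) \<Rightarrow> 'w set set" where
  "Up W r = {U. U \<subseteq> W \<and> (\<forall>x\<in>U. \<forall>y\<in>W. r x y \<longrightarrow> y \<in> U)}"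

definition cx_comp :: "('w \<Rightarrow> 'w \<Rightarrow> 'w set) \<Rightarrow> 'w set \<Rightarrow> 'w set \<Rightarrow> 'w set" where
  "cx_comp cmp U V = \<Union>{cmp x y | x y. x \<in> U \<and> y \<in> V}"

definition cx_neg :: "'w set \<Rightarrow> ('w \<Rightarrow> 'w) \<Rightarrow> 'w set \<Rightarrow> 'w set" where
  "cx_neg W f U = {w \<in> W. f w \<notin> U}"

definition psi :: "'a::complete_lattice \<Rightarrow> 'a set" where
  "psi a = {j \<in> Jinf. j \<le> a}"

end

theory Submission
  imports Defs
begin

text \<open>Let j be completely join-irreducible in the perfect distributive lattice. The join of
the elements strictly below j is not above j, so some completely meet-irreducible m lies above it
but not above j; m is meet-prime by distributivity, hence every a with \<open>j \<not>\<le> a\<close> lies below m.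
Thus \<open>\<kappa> j \<le> m\<close> is the largest element not above j, j is completely join-prime, and \<open>\<psi>\<close> is
a lattice isomorphism onto the upsets of \<open>J\<^sup>\<infinity>\<close>. Residuation makes multiplication preserve
joins in each argument, so a join-prime below \<open>a \<cdot> b\<close> lies below some \<open>x \<cdot> y\<close> with x, y
join-irreducibles below a and b. Each negation f is a dual order automorphism with inverse g;
it maps the meet-irreducible \<open>\<kappa> j\<close> to the join-irreducible \<open>g (\<kappa> j)\<close>, and
\<open>j \<le> f a\<close> iff \<open>f a \<not>\<le> \<kappa> j\<close> iff \<open>g (\<kappa> j) \<not>\<le> a\<close>.\<close>

lemma cmirr_meet_prime:
  fixes m :: "'a::complete_lattice"
  assumes D: "\<And>x y z::'a. inf x (sup y z) = sup (inf x y) (inf x z)"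
    and m: "cmirr m" and le: "inf a b \<le> m"
  shows "a \<le> m \<or> b \<le> m"
proof -
  have "m = sup m (inf a b)" using le by (simp add: sup_absorb1)
  also have "\<dots> = inf (sup m a) (sup m b)" by (rule distrib_imp1[OF D])
  also have "\<dots> = Inf {sup m a, sup m b}" by simp
  finally have "m \<in> {sup m a, sup m b}" using m unfolding cmirr_def by blast
  thus ?thesis by (metis insert_iff singletonD sup.absorb_iff1)
qed

lemma not_le_kappa:
  fixes j :: "'a::complete_lattice"
  assumes D: "\<And>x y z::'a. inf x (sup y z) = sup (inf x y) (inf x z)"
    and P: "perfect_lattice TYPE('a)" and j: "cjirr j"
  shows "\<not> j \<le> kappa j"
proof -
  define below where "below = Sup {k. cjirr k \<and> k < j}"
  have "below \<noteq> j"
  proof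
    assume "below = j"
    hence "j \<in> {k. cjirr k \<and> k < j}" using j unfolding cjirr_def below_def by (metis (lifting))
    thus False by simp
  qed
  moreover have "below \<le> j" unfolding below_def by (auto intro: Sup_least)
  ultimately have "\<not> j \<le> below" by simp
  moreover have "below = Inf {m. cmirr m \<and> below \<le> m}"
    using P unfolding perfect_lattice_def by blast
  ultimately obtain m where m: "cmirr m" "below \<le> m" "\<not> j \<le> m"
    by (metis (mono_tags, lifting) le_Inf_iff mem_Collect_eq)
  have "kappa j \<le> m" unfolding kappa_def
  proof (rule Sup_least)
    fix a assume "a \<in> {a. \<not> j \<le> a}"
    hence na: "\<not> j \<le> a" by simp
    have "inf j a = Sup {k. cjirr k \<and> k \<le> inf j a}"
      using P unfolding perfect_lattice_def by blast
    also have "\<dots> \<le> below" unfolding below_def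
    proof (rule Sup_mono, safe)
      fix k assume k: "cjirr k" "k \<le> inf j a"
      have "k \<le> j" using k by simp
      moreover have "k \<noteq> j" using k na by (metis le_inf_iff)
      ultimately have "k < j" by simp
      thus "\<exists>b\<in>{k. cjirr k \<and> k < j}. k \<le> b" using k by blast
    qed
    finally have "inf j a \<le> m" using m by simp
    thus "a \<le> m" using cmirr_meet_prime[OF D m(1)] m(3) by blast
  qed
  thus ?thesis using m(3) by (metis order_trans)
qed

lemma le_kappa_iff:
  fixes j :: "'a::complete_lattice"
  assumes D: "\<And>x y z::'a. inf x (sup y z) = sup (inf x y) (inf x z)"
    and P: "perfect_lattice TYPE('a)" and j: "cjirr j"
  shows "a \<le> kappa j \<longleftrightarrow> \<not> j \<le> a"
proof
  assume "a \<le> kappa j"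
  thus "\<not> j \<le> a" using not_le_kappa[OF D P j] by (metis order_trans)
next
  assume "\<not> j \<le> a"
  thus "a \<le> kappa j" unfolding kappa_def by (simp add: Sup_upper)
qed

lemma cjirr_le_Sup_imp:
  fixes j :: "'a::complete_lattice"
  assumes D: "\<And>x y z::'a. inf x (sup y z) = sup (inf x y) (inf x z)"
    and P: "perfect_lattice TYPE('a)" and j: "cjirr j" and le: "j \<le> Sup S"
  shows "\<exists>s\<in>S. j \<le> s"
proof (rule ccontr)
  assume "\<not> (\<exists>s\<in>S. j \<le> s)"
  hence "Sup S \<le> kappa j" using le_kappa_iff[OF D P j] by (blast intro: Sup_least)
  thus False using le not_le_kappa[OF D P j] by (metis order_trans)
qed

lemma cmirr_kappa:
  fixes j :: "'a::complete_lattice"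
  assumes D: "\<And>x y z::'a. inf x (sup y z) = sup (inf x y) (inf x z)"
    and P: "perfect_lattice TYPE('a)" and j: "cjirr j"
  shows "cmirr (kappa j)"
  unfolding cmirr_def
proof (intro allI impI)
  fix S assume S: "kappa j = Inf S"
  show "kappa j \<in> S"
  proof (rule ccontr)
    assume "kappa j \<notin> S"
    hence "\<forall>s\<in>S. \<not> s \<le> kappa j" using S by (metis Inf_lower order_antisym)
    hence "\<forall>s\<in>S. j \<le> s" using le_kappa_iff[OF D P j] by blast
    hence "j \<le> kappa j" using S by (simp add: le_Inf_iff)
    thus False using not_le_kappa[OF D P j] by simp
  qed
qed

lemma Sup_psi:
  fixes a :: "'a::complete_lattice"
  assumes "perfect_lattice TYPE('a)"
  shows "Sup (psi a) = a"
  using assms unfolding perfect_lattice_def psi_def Jinf_def by simp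

lemma psi_Sup_upset:
  fixes U :: "'a::complete_lattice set"
  assumes D: "\<And>x y z::'a. inf x (sup y z) = sup (inf x y) (inf x z)"
    and P: "perfect_lattice TYPE('a)" and U: "U \<in> Up Jinf plus_le"
  shows "psi (Sup U) = U"
proof (rule set_eqI, rule iffI)
  fix j assume "j \<in> psi (Sup U)"
  hence j: "cjirr j" "j \<le> Sup U" unfolding psi_def Jinf_def by auto
  then obtain u where "u \<in> U" "j \<le> u" using cjirr_le_Sup_imp[OF D P] by blast
  thus "j \<in> U" using U j unfolding Up_def plus_le_def Jinf_def by auto
next
  fix j assume "j \<in> U"
  thus "j \<in> psi (Sup U)" using U unfolding Up_def psi_def by (auto intro: Sup_upper)
qed

lemma bij_betw_psi_Up:
  assumes D: "\<And>x y z::'a::complete_lattice. inf x (sup y z) = sup (inf x y) (inf x z)"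
    and P: "perfect_lattice TYPE('a)"
  shows "bij_betw psi (UNIV :: 'a set) (Up Jinf plus_le)"
proof (rule bij_betw_byWitness[where f' = Sup])
  show "\<forall>a\<in>UNIV. Sup (psi a) = (a::'a)" using Sup_psi[OF P] by blast
  show "\<forall>U\<in>Up Jinf plus_le. psi (Sup U) = (U::'a set)" using psi_Sup_upset[OF D P] by blast
  show "psi ` UNIV \<subseteq> Up Jinf plus_le" unfolding Up_def psi_def plus_le_def by auto
  show "Sup ` Up Jinf plus_le \<subseteq> UNIV" by simp
qed

lemma psi_inf: "psi (inf a b) = psi a \<inter> psi b"
  unfolding psi_def by auto

lemma psi_sup:
  fixes a :: "'a::complete_lattice"
  assumes D: "\<And>x y z::'a. inf x (sup y z) = sup (inf x y) (inf x z)"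
    and P: "perfect_lattice TYPE('a)"
  shows "psi (sup a b) = psi a \<union> psi b"
proof (rule set_eqI, rule iffI)
  fix j assume "j \<in> psi (sup a b)"
  hence j: "cjirr j" "j \<le> Sup {a, b}" unfolding psi_def Jinf_def by auto
  then obtain s where "s \<in> {a, b}" "j \<le> s" using cjirr_le_Sup_imp[OF D P] by blast
  thus "j \<in> psi a \<union> psi b" using j unfolding psi_def Jinf_def by auto
qed (auto simp: psi_def intro: le_supI1 le_supI2)

lemma Galois_antitone_Sup:
  fixes f g :: "'a::complete_lattice \<Rightarrow> 'a"
  assumes G: "\<And>x y. x \<le> f y \<longleftrightarrow> y \<le> g x"
  shows "f (Sup S) = Inf (f ` S)"
proof -
  have "y \<le> f (Sup S) \<longleftrightarrow> y \<le> Inf (f ` S)" for y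
    by (simp add: G le_Inf_iff Sup_le_iff)
  thus ?thesis by (meson order_antisym order_refl)
qed

lemma cjirr_dual_image_kappa:
  fixes f g :: "'a::complete_lattice \<Rightarrow> 'a"
  assumes D: "\<And>x y z::'a. inf x (sup y z) = sup (inf x y) (inf x z)"
    and P: "perfect_lattice TYPE('a)"
    and G: "\<And>x y. x \<le> f y \<longleftrightarrow> y \<le> g x"
    and fg: "\<And>x. f (g x) = x" and gf: "\<And>x. g (f x) = x"
    and w: "cjirr w"
  shows "cjirr (g (kappa w))"
  unfolding cjirr_def
proof (intro allI impI)
  fix S assume "g (kappa w) = Sup S"
  hence "kappa w = Inf (f ` S)" using fg Galois_antitone_Sup[OF G] by metis
  hence "kappa w \<in> f ` S" using cmirr_kappa[OF D P w] unfolding cmirr_def by blast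
  thus "g (kappa w) \<in> S" using gf by auto
qed

lemma psi_dual_automorphism:
  fixes f g :: "'a::complete_lattice \<Rightarrow> 'a"
  assumes D: "\<And>x y z::'a. inf x (sup y z) = sup (inf x y) (inf x z)"
    and P: "perfect_lattice TYPE('a)"
    and G: "\<And>x y. x \<le> f y \<longleftrightarrow> y \<le> g x"
    and fg: "\<And>x. f (g x) = x" and gf: "\<And>x. g (f x) = x"
  shows "psi (f a) = cx_neg Jinf (plus_un g) (psi a)"
proof (rule set_eqI)
  fix w
  show "w \<in> psi (f a) \<longleftrightarrow> w \<in> cx_neg Jinf (plus_un g) (psi a)"
  proof (cases "cjirr w")
    case False
    thus ?thesis unfolding psi_def cx_neg_def Jinf_def by simp
  next
    case True
    have "w \<le> f a \<longleftrightarrow> \<not> f a \<le> kappa w" using le_kappa_iff[OF D P True] by blast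
    also have "\<dots> \<longleftrightarrow> \<not> g (kappa w) \<le> a" using G[of "f a" "g (kappa w)"] fg gf by simp
    finally show ?thesis
      using True cjirr_dual_image_kappa[OF D P G fg gf True]
      unfolding psi_def cx_neg_def Jinf_def plus_un_def by simp
  qed
qed

locale dqra =
  fixes mult :: "'a::complete_lattice \<Rightarrow> 'a \<Rightarrow> 'a"
    and e :: 'a and tld mn ng :: "'a \<Rightarrow> 'a"
  assumes DqRA: "DqRA mult e tld mn ng"
begin

lemma distrib: "inf (x::'a) (sup y z) = sup (inf x y) (inf x z)"
  using conjunct1[OF DqRA[unfolded DqRA_def]] by blast

lemma residuation_left: "mult a b \<le> c \<longleftrightarrow> a \<le> mn (mult b (tld c))"
  using DqRA unfolding DqRA_def by blast

lemma residuation_right: "mult a b \<le> c \<longleftrightarrow> b \<le> tld (mult (mn c) a)"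
  using DqRA unfolding DqRA_def by blast

lemma mult_e_left [simp]: "mult e a = a"
  and mult_e_right [simp]: "mult a e = a"
  using DqRA unfolding DqRA_def by auto

lemma ng_ng [simp]: "ng (ng a) = a"
  using DqRA unfolding DqRA_def by blast

lemma ng_inf: "ng (inf a b) = sup (ng a) (ng b)"
  using DqRA unfolding DqRA_def by blast

lemma mn_tld [simp]: "mn (tld c) = c"
proof -
  have "x \<le> c \<longleftrightarrow> x \<le> mn (tld c)" for x using residuation_left[of x e c] by simp
  thus ?thesis by (meson order_antisym order_refl)
qed

lemma tld_mn [simp]: "tld (mn c) = c"
proof -
  have "x \<le> c \<longleftrightarrow> x \<le> tld (mn c)" for x using residuation_right[of e x c] by simp
  thus ?thesis by (meson order_antisym order_refl)
qed

lemma mult_mono_left: "a \<le> a' \<Longrightarrow> mult a b \<le> mult a' b"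
  using residuation_left by (metis order_refl order_trans)

lemma mult_mono_right: "b \<le> b' \<Longrightarrow> mult a b \<le> mult a b'"
  using residuation_right by (metis order_refl order_trans)

lemma mult_mono: "a \<le> a' \<Longrightarrow> b \<le> b' \<Longrightarrow> mult a b \<le> mult a' b'"
  by (meson mult_mono_left mult_mono_right order_trans)

lemma mn_antitone:
  assumes "b \<le> b'"
  shows "mn b' \<le> mn b"
proof -
  have "mult (mn b') b' \<le> mn e" using residuation_left[of "mn b'" b' "mn e"] by simp
  with mult_mono_right[OF assms] have "mult (mn b') b \<le> mn e" by (rule order_trans)
  thus ?thesis using residuation_left[of "mn b'" b "mn e"] by simp
qed

lemma tld_antitone:
  assumes "b \<le> b'"
  shows "tld b' \<le> tld b"
proof -
  have "mult b' (tld b') \<le> tld e" using residuation_right[of b' "tld b'" "tld e"] by simp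
  with mult_mono_left[OF assms] have "mult b (tld b') \<le> tld e" by (rule order_trans)
  thus ?thesis using residuation_right[of b "tld b'" "tld e"] by simp
qed

lemma ng_antitone: "b \<le> b' \<Longrightarrow> ng b' \<le> ng b"
  by (metis inf.absorb1 ng_inf sup.cobounded2)

lemma le_tld_iff: "x \<le> tld y \<longleftrightarrow> y \<le> mn x"
  by (metis mn_antitone tld_antitone mn_tld tld_mn)

lemma le_mn_iff: "x \<le> mn y \<longleftrightarrow> y \<le> tld x"
  by (metis mn_antitone tld_antitone mn_tld tld_mn)

lemma le_ng_iff: "x \<le> ng y \<longleftrightarrow> y \<le> ng x"
  by (metis ng_antitone ng_ng)

lemma mult_Sup_left_le: "mult (Sup S) b \<le> Sup {mult s b | s. s \<in> S}"
proof -
  have "s \<le> mn (mult b (tld (Sup {mult s b | s. s \<in> S})))" if "s \<in> S" for s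
    using that residuation_left by (metis (mono_tags, lifting) Sup_upper mem_Collect_eq)
  thus ?thesis using residuation_left by (blast intro: Sup_least)
qed

lemma mult_Sup_right_le: "mult a (Sup S) \<le> Sup {mult a s | s. s \<in> S}"
proof -
  have "s \<le> tld (mult (mn (Sup {mult a s | s. s \<in> S})) a)" if "s \<in> S" for s
    using that residuation_right by (metis (mono_tags, lifting) Sup_upper mem_Collect_eq)
  thus ?thesis using residuation_right by (blast intro: Sup_least)
qed

lemma psi_mult:
  assumes P: "perfect_lattice TYPE('a)"
  shows "psi (mult a b) = cx_comp (plus_comp mult) (psi a) (psi b)"
proof (rule set_eqI, rule iffI)
  fix c assume "c \<in> psi (mult a b)"
  hence c: "cjirr c" "c \<le> mult a b" unfolding psi_def Jinf_def by auto
  have "mult a b \<le> Sup {mult x b | x. x \<in> psi a}"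
    using mult_Sup_left_le[of "psi a" b] Sup_psi[OF P, of a] by simp
  then obtain x where x: "x \<in> psi a" "c \<le> mult x b"
    using cjirr_le_Sup_imp[OF distrib P c(1)] c(2) order_trans by blast
  have "mult x b \<le> Sup {mult x y | y. y \<in> psi b}"
    using mult_Sup_right_le[of x "psi b"] Sup_psi[OF P, of b] by simp
  then obtain y where y: "y \<in> psi b" "c \<le> mult x y"
    using cjirr_le_Sup_imp[OF distrib P c(1)] x(2) order_trans by blast
  show "c \<in> cx_comp (plus_comp mult) (psi a) (psi b)"
    unfolding cx_comp_def plus_comp_def using x(1) y c(1) unfolding Jinf_def by blast
next
  fix c assume "c \<in> cx_comp (plus_comp mult) (psi a) (psi b)"
  then obtain x y where xy: "x \<in> psi a" "y \<in> psi b" "c \<in> Jinf" "c \<le> mult x y"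
    unfolding cx_comp_def plus_comp_def by blast
  have "mult x y \<le> mult a b" using xy(1,2) unfolding psi_def by (simp add: mult_mono)
  thus "c \<in> psi (mult a b)" using xy(3,4) unfolding psi_def by simp
qed

end

theorem mainTheorem11:
  fixes mult :: "'a::complete_lattice \<Rightarrow> 'a \<Rightarrow> 'a"
    and e :: 'a and tld mn ng :: "'a \<Rightarrow> 'a"
  assumes "DqRA mult e tld mn ng"
    and "perfect_lattice TYPE('a)"
  shows "bij_betw psi (UNIV :: 'a set) (Up Jinf plus_le)
    \<and> (\<forall>a b::'a. psi (inf a b) = psi a \<inter> psi b)
    \<and> (\<forall>a b::'a. psi (sup a b) = psi a \<union> psi b)
    \<and> (\<forall>a b. psi (mult a b) = cx_comp (plus_comp mult) (psi a) (psi b))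
    \<and> psi e = plus_I e
    \<and> (\<forall>a. psi (tld a) = cx_neg Jinf (plus_un mn) (psi a))
    \<and> (\<forall>a. psi (mn a) = cx_neg Jinf (plus_un tld) (psi a))
    \<and> (\<forall>a. psi (ng a) = cx_neg Jinf (plus_un ng) (psi a))"
proof -
  interpret dqra mult e tld mn ng by (rule dqra.intro[OF assms(1)])
  note D = distrib and P = assms(2)
  have "psi e = plus_I e" unfolding psi_def plus_I_def by simp
  thus ?thesis
    by (simp add: bij_betw_psi_Up[OF D P] psi_inf psi_sup[OF D P] psi_mult[OF P]
        psi_dual_automorphism[OF D P le_tld_iff tld_mn mn_tld]
        psi_dual_automorphism[OF D P le_mn_iff mn_tld tld_mn]
        psi_dual_automorphism[OF D P le_ng_iff ng_ng ng_ng])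
qed

end
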